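(* Let $H$ be a hyperbolic component of the Mandelbrot set $\mathfrak{M}$ different from the main cardioid, with associated angles $\theta_H^-<\theta_H^+$. Define the discontinuity locus \[\mathrm{Disc}(H)=\big\{\theta\in\mathbb{T} : I^{\circ}_{\theta_H^+}(\theta)\neq I^{\circ}_{\theta_H^-}(\theta)\big\}.\] Then \[\mathrm{Disc}(H)=\bigcup_{m\geq 1}\sigma^{-m}(\Pi_1(H)).\]
   Context: $\mathbb{T}=\mathbb{R}/\mathbb{Z}$ and $\sigma:\mathbb{T}\to\mathbb{T}$, $\sigma(\theta)=2\theta$, is the angle-doubling map. For $a,b\in\mathbb{T}$, the notations $(a,b)$, $[a,b]$, $[a,b)$, $(a,b]$ denote arcs of $\mathbb{T}$ traversed in the positive direction from $a$ to $b$. Let $\mathfrak{M}$ be the Mandelbrot set and $R_{\mathfrak{M}}(\theta)$ its external (parameter) ray of angle $\theta$. For a hyperbolic component $H$ of $\mathfrak{M}$ other than the main cardioid, with root point $r_H$, there are exactly two angles $0<\theta_H^-<\theta_H^+<1$ whose parameter rays land at $r_H$ (Douady–Hubbard). Set $\Pi_1(H)=[\theta_H^-,\theta_H^+]\subset\mathbb{T}$. For $\alpha\in\mathbb{T}$, the coding $I^{\circ}_{\alpha}:\mathbb{T}\to\{A,B,\circ\}^{\mathbb{N}}$ sends $\theta$ to $i_0i_1\cdots$ where, for $n\ge 0$, $i_n=A$ if $\sigma^n(\theta)\in(\frac{\alpha+1}{2},\frac{\alpha}{2})$, $i_n=B$ if $\sigma^n(\theta)\in(\frac{\alpha}{2},\frac{\alpha+1}{2})$,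 and $i_n=\circ$ if $\sigma^n(\theta)\in\{\frac{\alpha}{2},\frac{\alpha+1}{2}\}$. *)

theory Defs
  imports "HOL-Complex_Analysis.Complex_Analysis"
begin

section \<open>Circle T = R/Z, represented by real numbers modulo 1\<close>

definition sigma :: "real \<Rightarrow> real" where
  "sigma x = frac (2 * x)"

text \<open>Open arc (a,b) of T traversed positively from a to b (as a 1-periodic set of reals).\<close>
definition open_arc :: "real \<Rightarrow> real \<Rightarrow> real set" where
  "open_arc a b = {x. 0 < frac (x - a) \<and> frac (x - a) < frac (b - a)}"

definition closed_arc :: "real \<Rightarrow> real \<Rightarrow> real set" where
  "closed_arc a b = {x. frac (x - a) \<le> frac (b - a)}"

datatype itsym = A | B | Circ

definition coding :: "real \<Rightarrow> real \<Rightarrow> nat \<Rightarrow> itsym" where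
  "coding \<alpha> \<theta> n =
     (let x = (sigma ^^ n) \<theta> in
      if x \<in> open_arc ((\<alpha> + 1) / 2) (\<alpha> / 2) then A
      else if x \<in> open_arc (\<alpha> / 2) ((\<alpha> + 1) / 2) then B
      else Circ)"

definition qc :: "complex \<Rightarrow> complex \<Rightarrow> complex" where
  "qc c z = z ^ 2 + c"

definition mandelbrot :: "complex set" where
  "mandelbrot = {c. bounded (range (\<lambda>n. (qc c ^^ n) 0))}"

definition PhiM :: "complex \<Rightarrow> complex" where
  "PhiM = (THE \<Phi>. \<Phi> holomorphic_on (- mandelbrot)
              \<and> bij_betw \<Phi> (- mandelbrot) {w. norm w > 1}
              \<and> ((\<lambda>c. \<Phi> c / c) \<longlongrightarrow> 1) at_infinity)"

definition param_ray :: "real \<Rightarrow> complex set" where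
  "param_ray \<theta> = {c \<in> - mandelbrot. \<exists>r>1. PhiM c = complex_of_real r * cis (2 * pi * \<theta>)}"

definition ray_lands :: "real \<Rightarrow> complex \<Rightarrow> bool" where
  "ray_lands \<theta> c \<longleftrightarrow>
     ((\<lambda>r. inv_into (- mandelbrot) PhiM (complex_of_real r * cis (2 * pi * \<theta>)))
        \<longlongrightarrow> c) (at_right 1)"

text \<open>Multiplier of the n-cycle through z (derivative of the n-th iterate at z).\<close>
definition multiplier :: "complex \<Rightarrow> complex \<Rightarrow> nat \<Rightarrow> complex" where
  "multiplier c z n = (\<Prod>k<n. 2 * (qc c ^^ k) z)"

definition exact_period :: "complex \<Rightarrow> complex \<Rightarrow> nat \<Rightarrow> bool" where
  "exact_period c z n \<longleftrightarrow> n > 0 \<and> (qc c ^^ n) z = z \<and> (\<forall>j. 0 < j \<and> j < n \<longrightarrow> (qc c ^^ j) z \<noteq> z)"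

definition hyperbolic_params :: "complex set" where
  "hyperbolic_params = {c. \<exists>z n. exact_period c z n \<and> norm (multiplier c z n) < 1}"

definition hyperbolic_component :: "complex set \<Rightarrow> bool" where
  "hyperbolic_component H \<longleftrightarrow>
     (\<exists>c \<in> hyperbolic_params. H = connected_component_set hyperbolic_params c)"

definition main_cardioid :: "complex set" where
  "main_cardioid = connected_component_set hyperbolic_params 0"

text \<open>Root of H: the boundary point at which the multiplier of the attracting cycle
  (continuously extended to the closure) equals 1.\<close>
definition is_root :: "complex set \<Rightarrow> complex \<Rightarrow> bool" where
  "is_root H r \<longleftrightarrow> r \<in> frontier H \<and>
     (\<exists>cs zs ns. (\<forall>k. cs k \<in> H \<and> exact_period (cs k) (zs k) (ns k)
                        \<and> norm (multiplier (cs k) (zs k) (ns k)) < 1)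
               \<and> cs \<longlonglongrightarrow> r
               \<and> (\<lambda>k. multiplier (cs k) (zs k) (ns k)) \<longlonglongrightarrow> 1)"

end

theory Submission
  imports Defs
begin

text \<open>The symbol of \<open>I\<^sup>\<circ>\<^sub>\<alpha>\<close> at a point only records on which side of the diameter
  \<open>{\<alpha>/2, (\<alpha>+1)/2}\<close> the point lies. As \<alpha> moves from \<open>\<theta>\<^sub>H\<^sup>-\<close> to \<open>\<theta>\<^sub>H\<^sup>+\<close>, this diameter
  sweeps out the two arcs \<open>[\<theta>\<^sub>H\<^sup>-/2, \<theta>\<^sub>H\<^sup>+/2]\<close> and \<open>[(\<theta>\<^sub>H\<^sup>-+1)/2, (\<theta>\<^sub>H\<^sup>++1)/2]\<close>, whose union is
  \<open>\<sigma>\<^sup>-\<^sup>1(\<Pi>\<^sub>1(H))\<close>. Hence the \<open>n\<close>-th symbols of the two codings differ exactly when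
  \<open>\<sigma>\<^sup>n\<^sup>+\<^sup>1(\<theta>) \<in> \<Pi>\<^sub>1(H)\<close>.\<close>

lemma frac_diff_unit_interval:
  fixes x a :: real
  assumes "0 \<le> a" "a < 1"
  shows "frac (x - a) = (if a \<le> frac x then frac x - a else frac x - a + 1)"
  using frac_diff_pos[of a x] frac_diff_neg[of x a] assms by auto

lemma mem_open_arc_iff:
  fixes x a b :: real
  assumes "0 \<le> a" "a < 1" "0 \<le> b" "b < 1"
  shows "x \<in> open_arc a b \<longleftrightarrow>
    (if a \<le> b then a < frac x \<and> frac x < b else a < frac x \<or> frac x < b)"
  using frac_ge_0[of x] frac_lt_1[of x] assms
    frac_diff_unit_interval[of a x] frac_diff_unit_interval[of a b]
  by (auto simp: open_arc_def simp del: frac_ge_0 frac_gt_0_iff)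

lemma mem_closed_arc_iff:
  fixes x a b :: real
  assumes "0 \<le> a" "a \<le> b" "b < 1"
  shows "x \<in> closed_arc a b \<longleftrightarrow> a \<le> frac x \<and> frac x \<le> b"
  using frac_ge_0[of x] frac_lt_1[of x] assms
    frac_diff_unit_interval[of a x] frac_diff_unit_interval[of a b]
  by (auto simp: closed_arc_def simp del: frac_ge_0)

lemma sigma_eq: "sigma x = (if frac x < 1/2 then 2 * frac x else 2 * frac x - 1)"
proof -
  define y where "y = frac x"
  have "sigma x = (if y + y < 1 then y + y else y + y - 1)"
    unfolding sigma_def y_def mult_2 by (rule frac_add)
  then show ?thesis
    unfolding y_def[symmetric] by auto
qed

lemma sigma_mem_closed_arc_iff:
  fixes x a b :: real
  assumes "0 \<le> a" "a \<le> b" "b < 1"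
  shows "sigma x \<in> closed_arc a b \<longleftrightarrow>
    frac x \<in> {a/2..b/2} \<union> {(a+1)/2..(b+1)/2}"
proof -
  define y where "y = frac x"
  have y: "0 \<le> y" "y < 1"
    by (simp_all add: y_def frac_lt_1)
  have "frac (sigma x) = sigma x"
    by (simp add: sigma_def)
  then have "sigma x \<in> closed_arc a b \<longleftrightarrow> a \<le> sigma x \<and> sigma x \<le> b"
    using assms by (simp add: mem_closed_arc_iff)
  also have "\<dots> \<longleftrightarrow> y \<in> {a/2..b/2} \<union> {(a+1)/2..(b+1)/2}"
    using assms y unfolding sigma_eq[of x] y_def[symmetric] by auto
  finally show ?thesis
    unfolding y_def .
qed

definition side_letter :: "real \<Rightarrow> real \<Rightarrow> itsym" where
  "side_letter \<alpha> y =
     (if y < \<alpha>/2 \<or> (\<alpha>+1)/2 < y then A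
      else if \<alpha>/2 < y \<and> y < (\<alpha>+1)/2 then B
      else Circ)"

lemma coding_eq_side_letter:
  assumes "0 \<le> \<alpha>" "\<alpha> < 1"
  shows "coding \<alpha> \<theta> n = side_letter \<alpha> (frac ((sigma ^^ n) \<theta>))"
  using assms by (auto simp: coding_def side_letter_def mem_open_arc_iff)

lemma side_letter_differs_iff:
  fixes a b y :: real
  assumes "0 \<le> a" "a < b" "b < 1"
  shows "side_letter b y \<noteq> side_letter a y \<longleftrightarrow> y \<in> {a/2..b/2} \<union> {(a+1)/2..(b+1)/2}"
  using assms by (auto simp: side_letter_def)

lemma coding_differs_iff:
  fixes a b :: real
  assumes "0 \<le> a" "a < b" "b < 1"
  shows "coding b \<theta> n \<noteq> coding a \<theta> n \<longleftrightarrow> (sigma ^^ Suc n) \<theta> \<in> closed_arc a b"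
  using assms
  by (simp add: coding_eq_side_letter side_letter_differs_iff sigma_mem_closed_arc_iff)

theorem lemma2p4:
  fixes H :: "complex set" and rH :: complex and tm tp :: real
  assumes "hyperbolic_component H"
    and "H \<noteq> main_cardioid"
    and "is_root H rH"
    and "0 < tm" and "tm < tp" and "tp < 1"
    and "ray_lands tm rH" and "ray_lands tp rH"
  shows "{\<theta>. coding tp \<theta> \<noteq> coding tm \<theta>}
           = (\<Union>m\<in>{1..}. {\<theta>. (sigma ^^ m) \<theta> \<in> closed_arc tm tp})"
proof -
  have "{\<theta>. coding tp \<theta> \<noteq> coding tm \<theta>}
      = (\<Union>n. {\<theta>. (sigma ^^ Suc n) \<theta> \<in> closed_arc tm tp})"
    using coding_differs_iff[of tm tp] assms(4-6) by (auto simp: fun_eq_iff)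
  also have "\<dots> = (\<Union>m\<in>{1..}. {\<theta>. (sigma ^^ m) \<theta> \<in> closed_arc tm tp})"
    by (simp only: One_nat_def atLeast_Suc_greaterThan greaterThan_0 image_image)
  finally show ?thesis .
qed

end
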